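(* In a deterministic interest-rate model (as described in the context), if the long Libor rate $L_{0\infty}$ is finite, then for all $t\ge0$ the long Libor rate $L_{t\infty}$ is finite and is given by $L_{t\infty}=P_{0t}L_{0\infty}$.
   Context: A deterministic interest-rate model is given by a deterministic initial discount function $T\mapsto P_{0T}>0$ ($T\ge0$, $P_{00}=1$), with discount bond prices at later times determined by absence of arbitrage as $P_{tT}=P_{0T}/P_{0t}$ for $0\le t<T$. The Libor rate is defined by $P_{tT}=1/[1+(T-t)L_{tT}]$, and the long Libor rate is $L_{t\infty}=\limsup_{T\to\infty}L_{tT}$. *)

theory Defs
  imports Complex_Main "HOL-Library.Extended_Real" "HOL-Library.Liminf_Limsup"
begin

text \<open>Discount bond price P_tT = P_0T / P_0t, given the initial discount function P.\<close>
definition bond :: "(real \<Rightarrow> real) \<Rightarrow> real \<Rightarrow> real \<Rightarrow> real" where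
  "bond P t T = P T / P t"

text \<open>Libor rate L_tT, defined by P_tT = 1 / (1 + (T - t) L_tT), for T > t.\<close>
definition libor :: "(real \<Rightarrow> real) \<Rightarrow> real \<Rightarrow> real \<Rightarrow> real" where
  "libor P t T = (1 / bond P t T - 1) / (T - t)"

definition long_libor :: "(real \<Rightarrow> real) \<Rightarrow> real \<Rightarrow> ereal" where
  "long_libor P t = Limsup at_top (\<lambda>T. ereal (libor P t T))"

end

theory Submission
  imports Defs
begin

text \<open>For \<open>T > t\<close> the rate \<open>L\<^sub>t\<^sub>T\<close> equals \<open>P\<^sub>0\<^sub>t\<close> times
  \<open>L\<^sub>0\<^sub>T + (t L\<^sub>0\<^sub>T - (1/P\<^sub>0\<^sub>t - 1)) / (T - t)\<close>. Finiteness of the long rate bounds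
  \<open>L\<^sub>0\<^sub>T\<close> above for large \<open>T\<close>, and positivity of bond prices bounds it below, so the
  correction term vanishes as \<open>T \<rightarrow> \<infinity>\<close>; a vanishing perturbation does not change a limsup,
  and the positive factor \<open>P\<^sub>0\<^sub>t\<close> can be pulled out of it.\<close>

lemma Limsup_add_tendsto_zero_le:
  fixes f e :: "'a \<Rightarrow> real"
  assumes e: "(e \<longlongrightarrow> 0) F" and F: "F \<noteq> bot"
  shows "Limsup F (\<lambda>x. ereal (f x + e x)) \<le> Limsup F (\<lambda>x. ereal (f x))"
proof (rule ereal_le_epsilon2)
  fix d :: real assume "0 < d"
  then have "eventually (\<lambda>x. e x < d) F"
    using tendstoD[OF e \<open>0 < d\<close>] by (auto simp: dist_real_def elim!: eventually_mono)
  then have "Limsup F (\<lambda>x. ereal (f x + e x)) \<le> Limsup F (\<lambda>x. ereal (f x) + ereal d)"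
    by (intro Limsup_mono) (auto elim: eventually_mono)
  also have "\<dots> = Limsup F (\<lambda>x. ereal (f x)) + ereal d"
    using F by (rule Limsup_add_ereal_right) simp
  finally show "Limsup F (\<lambda>x. ereal (f x + e x)) \<le> Limsup F (\<lambda>x. ereal (f x)) + ereal d" .
qed

lemma Limsup_add_tendsto_zero:
  fixes f e :: "'a \<Rightarrow> real"
  assumes e: "(e \<longlongrightarrow> 0) F" and F: "F \<noteq> bot"
  shows "Limsup F (\<lambda>x. ereal (f x + e x)) = Limsup F (\<lambda>x. ereal (f x))"
proof (rule antisym)
  show "Limsup F (\<lambda>x. ereal (f x + e x)) \<le> Limsup F (\<lambda>x. ereal (f x))"
    using e F by (rule Limsup_add_tendsto_zero_le)
  have "((\<lambda>x. - e x) \<longlongrightarrow> 0) F"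
    using tendsto_minus[OF e] by simp
  then show "Limsup F (\<lambda>x. ereal (f x)) \<le> Limsup F (\<lambda>x. ereal (f x + e x))"
    using Limsup_add_tendsto_zero_le[of "\<lambda>x. - e x" F "\<lambda>x. f x + e x"] F by simp
qed

lemma Bfun_divide_tendsto_zero:
  fixes f g :: "'a \<Rightarrow> real"
  assumes f: "Bfun f F" and g: "filterlim g at_infinity F"
  shows "((\<lambda>x. f x / g x) \<longlongrightarrow> 0) F"
proof -
  have "Zfun (\<lambda>x. inverse (g x)) F"
    using filterlim_compose[OF tendsto_inverse_0 g] by (simp add: tendsto_Zfun_iff)
  then have "Zfun (\<lambda>x. f x * inverse (g x)) F"
    by (rule bounded_bilinear.Bfun_prod_Zfun[OF bounded_bilinear_mult f])
  then show ?thesis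
    by (simp add: tendsto_Zfun_iff divide_inverse)
qed

lemma minus_one_div_less_libor:
  assumes "0 < P t" "0 < P T" "t < T"
  shows "- 1 / (T - t) < libor P t T"
proof -
  have "- 1 < P t / P T - 1"
    using assms by simp
  then have "- 1 / (T - t) < (P t / P T - 1) / (T - t)"
    using assms by (intro divide_strict_right_mono) auto
  then show ?thesis
    by (simp add: libor_def bond_def)
qed

lemma libor_rebase:
  assumes P0: "P 0 = 1" and pos: "0 < P t" "0 < P T" and t: "0 \<le> t" "t < T"
  shows "libor P t T = P t * (libor P 0 T + (t * libor P 0 T - (1 / P t - 1)) / (T - t))"
proof -
  have L0: "T * libor P 0 T = 1 / P T - 1"
    using P0 t by (simp add: libor_def bond_def)
  have "libor P t T = (P t / P T - 1) / (T - t)"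
    by (simp add: libor_def bond_def)
  also have "\<dots> = P t * ((1 / P T - 1 / P t) / (T - t))"
    using pos by (simp add: right_diff_distrib)
  also have "\<dots> = P t * ((T * libor P 0 T - (1 / P t - 1)) / (T - t))"
    unfolding L0 by simp
  also have "\<dots> = P t * (libor P 0 T + (t * libor P 0 T - (1 / P t - 1)) / (T - t))"
    using t by (simp add: add_divide_eq_iff algebra_simps)
  finally show ?thesis .
qed

lemma Bfun_libor_at_top:
  assumes pos: "\<And>T. t \<le> T \<Longrightarrow> 0 < P T" and fin: "long_libor P t < \<infinity>"
  shows "Bfun (libor P t) at_top"
proof -
  obtain b where "long_libor P t < ereal b"
    using ereal_dense2[OF fin] by blast
  then have "eventually (\<lambda>T. ereal (libor P t T) < ereal b) at_top"
    unfolding long_libor_def by (rule Limsup_lessD)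
  then have upper: "eventually (\<lambda>T. libor P t T < b) at_top"
    by simp
  have lower: "eventually (\<lambda>T. - 1 \<le> libor P t T) at_top"
  proof (rule eventually_at_top_linorderI)
    fix T :: real assume T: "t + 1 \<le> T"
    have "1 / (T - t) \<le> 1"
      using T by simp
    moreover have "- 1 / (T - t) < libor P t T"
      using T pos by (intro minus_one_div_less_libor) auto
    ultimately show "- 1 \<le> libor P t T"
      by simp
  qed
  from upper lower have "eventually (\<lambda>T. \<bar>libor P t T\<bar> \<le> \<bar>b\<bar> + 1) at_top"
    by eventually_elim linarith
  then show ?thesis
    by (intro BfunI) simp
qed

theorem proposition7:
  fixes P :: "real \<Rightarrow> real" and c :: real
  assumes pos: "\<And>T. T \<ge> 0 \<Longrightarrow> P T > 0"
    and P0: "P 0 = 1"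
    and fin: "long_libor P 0 = ereal c"
  shows "\<forall>t\<ge>0. long_libor P t = ereal (P t * c)"
proof (intro allI impI)
  fix t :: real assume t: "t \<ge> 0"
  define e where "e T = (t * libor P 0 T - (1 / P t - 1)) / (T - t)" for T
  have shift: "filterlim (\<lambda>T. T - t) at_infinity at_top"
    using filterlim_tendsto_add_at_top[OF tendsto_const filterlim_ident, of "- t"]
    by (simp add: filterlim_at_top_imp_at_infinity)
  have "((\<lambda>T. t * (libor P 0 T / (T - t)) - (1 / P t - 1) / (T - t)) \<longlongrightarrow> t * 0 - 0) at_top"
    using pos fin
    by (intro tendsto_diff tendsto_mult tendsto_const tendsto_divide_0[OF tendsto_const shift]
        Bfun_divide_tendsto_zero[OF Bfun_libor_at_top shift]) auto
  then have e0: "(e \<longlongrightarrow> 0) at_top"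
    unfolding e_def diff_divide_distrib times_divide_eq_right[symmetric] by simp
  have "eventually (\<lambda>T. libor P t T = P t * (libor P 0 T + e T)) at_top"
    using eventually_gt_at_top[of t]
  proof eventually_elim
    case (elim T)
    then show ?case
      using libor_rebase[OF P0 pos[of t] pos[of T]] t unfolding e_def by simp
  qed
  then have "long_libor P t = Limsup at_top (\<lambda>T. ereal (P t) * ereal (libor P 0 T + e T))"
    unfolding long_libor_def by (auto intro: Limsup_eq elim: eventually_mono)
  also have "\<dots> = ereal (P t) * Limsup at_top (\<lambda>T. ereal (libor P 0 T + e T))"
    using less_imp_le[OF pos[OF t]] by (intro Limsup_ereal_mult_left) auto
  also have "\<dots> = ereal (P t * c)"
    using fin Limsup_add_tendsto_zero[OF e0] by (simp add: long_libor_def)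
  finally show "long_libor P t = ereal (P t * c)" .
qed

end
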